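(* Let $w:\mathbb{Z}\to\mathbb{R}$ be a weight with $w(n)\geq 1$ for all $n$ and $\sup_{n\in\mathbb{Z}}\big(|\tfrac{w(n+1)}{w(n)}|+|\tfrac{w(n)}{w(n+1)}|\big)<\infty$. Fix $1\leq p\leq\infty$ and let $\alpha_0,\beta_0,\tilde\alpha_0,\tilde\beta_0:\mathbb{Z}\to\mathbb{C}$ be bounded sequences such that \begin{itemize} \item if $1\leq p<\infty$: $\|(\alpha_0,\beta_0)\|_{w,2p}<\infty$, $\|(\alpha_0-\alpha_0^+,\beta_0-\beta_0^+)\|_{w,p}<\infty$, and $\|(\tilde\alpha_0,\tilde\beta_0)\|_{w,p}<\infty$; \item if $p=\infty$: $\|(\alpha_0,\beta_0)\|_{w,\infty}<\infty$, $\|(\alpha_0-\alpha_0^+,\beta_0-\beta_0^+)\|_{w^2,\infty}<\infty$, and $\|(\tilde\alpha_0,\tilde\beta_0)\|_{w^2,\infty}<\infty$. \end{itemize} Let $(\alpha(t),\beta(t))$, $t\in(-T,T)$, be the unique (local, bounded) solution of the Ablowitz--Ladik system \[ -i\alpha_t-(1-\alpha\beta)(\alpha^-+\alpha^+)+2\alpha=0,\qquad -i\beta_t+(1-\alpha\beta)(\beta^-+\beta^+)-2\beta=0 \] with initial conditions $\alpha(0)=\alpha_0+\tilde\alpha_0$, $\beta(0)=\beta_0+\tilde\beta_0$. Then this solution is of the form $\alpha(t)=\alpha_0+\tilde\alpha(t)$, $\beta(t)=\beta_0+\tilde\beta(t)$, where for all $t\in(-T,T)$ one has $\|(\tilde\alpha(t),\tilde\beta(t))\|_{w,p}<\infty$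 if $1\leq p<\infty$, respectively $\|(\tilde\alpha(t),\tilde\beta(t))\|_{w^2,\infty}<\infty$ if $p=\infty$.
   Context: Here $\alpha=\alpha(n,t)$, $\beta=\beta(n,t)$, $(n,t)\in\mathbb{Z}\times\mathbb{R}$, are complex-valued, and for a sequence $f$ we write $f^\pm(n)=f(n\pm1)$ (also $f^\pm(n,t)=f(n\pm1,t)$). For a weight $v:\mathbb{Z}\to[1,\infty)$ and pairs of sequences $(\alpha,\beta)$ define \[ \|(\alpha,\beta)\|_{v,p}=\Big(\sum_{n\in\mathbb{Z}} v(n)\big(|\alpha(n)|^p+|\beta(n)|^p\big)\Big)^{1/p}\ (1\leq p<\infty),\qquad \|(\alpha,\beta)\|_{v,\infty}=\sup_{n\in\mathbb{Z}} v(n)\big(|\alpha(n)|+|\beta(n)|\big). \] $w^2$ denotes the weight $n\mapsto w(n)^2$. $T>0$ denotes the length of the existence interval of the local solution of the initial value problem (solutions are $C^1$ in $t$ with values in bounded sequences). *)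

theory Defs
  imports "HOL-Analysis.Analysis"
begin

definition bounded_seq :: "(int \<Rightarrow> complex) \<Rightarrow> bool" where
  "bounded_seq a \<longleftrightarrow> bdd_above (range (\<lambda>n. norm (a n)))"

definition wnorm_p_finite :: "(int \<Rightarrow> real) \<Rightarrow> real \<Rightarrow> (int \<Rightarrow> complex) \<Rightarrow> (int \<Rightarrow> complex) \<Rightarrow> bool" where
  "wnorm_p_finite v p a b \<longleftrightarrow>
     (\<lambda>n. v n * (norm (a n) powr p + norm (b n) powr p)) summable_on UNIV"

definition wnorm_inf_finite :: "(int \<Rightarrow> real) \<Rightarrow> (int \<Rightarrow> complex) \<Rightarrow> (int \<Rightarrow> complex) \<Rightarrow> bool" where
  "wnorm_inf_finite v a b \<longleftrightarrow> bdd_above (range (\<lambda>n. v n * (norm (a n) + norm (b n))))"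

end

theory Submission
  imports Defs
begin

text \<open>Let \<open>u(t, n) = |\<alpha>(t, n) - \<alpha>0(n)| + |\<beta>(t, n) - \<beta>0(n)|\<close>. On a compact time interval the
  solution is bounded, and the Ablowitz--Ladik equations then bound \<open>|\<alpha>\<^sub>t| + |\<beta>\<^sub>t|\<close> at site \<open>n\<close> by a
  forcing term \<open>F(n)\<close>, built from the jumps of \<open>\<alpha>0, \<beta>0\<close> and from \<open>|\<alpha>0| |\<beta>0|\<close> and hence lying in the
  weighted space, plus \<open>K (u(n - 1) + u(n) + u(n + 1))\<close>. On a time interval of length \<open>\<tau>\<close> starting at
  \<open>t0\<close>, the supremum \<open>G\<close> of \<open>u\<close> over the interval therefore satisfies
  \<open>G(n) \<le> u(t0, n) + \<tau> (F(n) + K (G(n - 1) + G(n) + G(n + 1)))\<close>. As the weight changes by at most a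
  fixed factor between neighbouring sites, the weighted \<open>p\<close>-sums (or weighted maxima) of \<open>G\<close> over
  \<open>[-N, N]\<close> satisfy a contracting recurrence in \<open>N\<close> once \<open>\<tau> K\<close> is small; since \<open>G\<close> is bounded they
  grow at most geometrically, so they are bounded uniformly in \<open>N\<close>. Finitely many such short time
  steps reach any \<open>t \<in> (-T, T)\<close> from \<open>0\<close>.\<close>

section \<open>Elementary estimates\<close>

lemma sum_list_powr_le:
  fixes xs :: "real list"
  assumes nonneg: "\<And>x. x \<in> set xs \<Longrightarrow> 0 \<le> x" and p: "0 \<le> p"
  shows "sum_list xs powr p \<le> real (length xs) powr p * sum_list (map (\<lambda>x. x powr p) xs)"
proof (cases "xs = []")
  case True
  then show ?thesis by simp
next
  case False
  define m where "m = Max (set xs)"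
  have m: "m \<in> set xs" using False by (simp add: m_def)
  have "sum_list xs \<le> sum_list (map (\<lambda>_. m) xs)"
    using sum_list_mono[of xs "\<lambda>x. x" "\<lambda>_. m"] by (simp add: m_def)
  then have "sum_list xs powr p \<le> (real (length xs) * m) powr p"
    using nonneg p by (intro powr_mono2) (auto simp: sum_list_triv sum_list_nonneg)
  also have "\<dots> = real (length xs) powr p * m powr p"
    using nonneg[OF m] by (simp add: powr_mult)
  also have "m powr p \<le> sum_list (map (\<lambda>x. x powr p) xs)"
    using m by (intro member_le_sum_list) auto
  finally show ?thesis by (simp add: mult_left_mono)
qed

lemma powr_mult_le_powr_double_add:
  fixes x y q :: real
  assumes "0 \<le> x" "0 \<le> y"
  shows "(x * y) powr q \<le> x powr (2 * q) + y powr (2 * q)"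
proof -
  have sq: "z powr (2 * q) = (z powr q)\<^sup>2" for z :: real
    by (simp add: power2_eq_square flip: powr_add)
  have "(x * y) powr q = x powr q * y powr q" using assms by (simp add: powr_mult)
  also have "\<dots> \<le> (x powr q)\<^sup>2 + (y powr q)\<^sup>2"
  proof -
    have "0 \<le> x powr q * y powr q" by simp
    then show ?thesis using sum_squares_bound[of "x powr q" "y powr q"] by linarith
  qed
  finally show ?thesis by (simp only: sq)
qed

lemma le_geometric_of_ratio_bound:
  fixes w :: "int \<Rightarrow> real"
  assumes up: "\<And>n. w (n + 1) \<le> R * w n" and down: "\<And>n. w n \<le> R * w (n + 1)" and R: "0 \<le> R"
  shows "w n \<le> w 0 * R ^ nat \<bar>n\<bar>"
proof -
  have "w (int k) \<le> w 0 * R ^ k \<and> w (- int k) \<le> w 0 * R ^ k" for k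
  proof (induction k)
    case (Suc k)
    have "w (int (Suc k)) \<le> R * w (int k)" using up[of "int k"] by (simp add: add.commute)
    also have "\<dots> \<le> R * (w 0 * R ^ k)" using Suc R by (intro mult_left_mono) auto
    finally have "w (int (Suc k)) \<le> w 0 * R ^ Suc k" by (simp add: algebra_simps)
    moreover have "w (- int (Suc k)) \<le> R * w (- int k)" using down[of "- int (Suc k)"] by simp
    moreover have "\<dots> \<le> R * (w 0 * R ^ k)" using Suc R by (intro mult_left_mono) auto
    ultimately show ?case by (simp add: algebra_simps)
  qed simp
  moreover have "n = int (nat \<bar>n\<bar>) \<or> n = - int (nat \<bar>n\<bar>)" by arith
  ultimately show ?thesis by metis
qed

text \<open>Iterating the recurrence \<open>k\<close> times gives \<open>S N \<le> 2 A + (\<epsilon> Q)\<^sup>k D Q\<^sup>N\<close>.\<close>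
lemma le_of_contracting_recurrence:
  fixes S :: "nat \<Rightarrow> real"
  assumes rec: "\<And>N. S N \<le> A + \<epsilon> * S (Suc N)"
    and S_nonneg: "\<And>N. 0 \<le> S N" and A: "0 \<le> A" and \<epsilon>: "0 \<le> \<epsilon>"
    and growth: "\<And>N. S N \<le> D * Q ^ N" and Q: "1 \<le> Q" and contraction: "\<epsilon> * Q \<le> 1/2"
  shows "S N \<le> 2 * A"
proof -
  have \<epsilon>_half: "\<epsilon> \<le> 1/2" using mult_left_mono[OF Q \<epsilon>] contraction by simp
  have iter: "\<forall>N. S N \<le> 2 * A + \<epsilon> ^ k * S (N + k)" for k
  proof (induction k)
    case (Suc k)
    show ?case
    proof
      fix N
      have "S N \<le> A + \<epsilon> * (2 * A + \<epsilon> ^ k * S (Suc N + k))"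
        using rec[of N] Suc.IH \<epsilon> by (meson add_left_mono mult_left_mono order_trans)
      moreover have "\<epsilon> * (2 * A) \<le> A" using mult_right_mono[OF \<epsilon>_half, of "2 * A"] A by simp
      ultimately show "S N \<le> 2 * A + \<epsilon> ^ Suc k * S (N + Suc k)" by (simp add: algebra_simps)
    qed
  qed (simp add: A)
  have D: "0 \<le> D" using growth[of 0] S_nonneg[of 0] by simp
  have bound: "S N \<le> 2 * A + D * Q ^ N * (1/2) ^ k" for k
  proof -
    have "\<epsilon> ^ k * S (N + k) \<le> \<epsilon> ^ k * (D * Q ^ (N + k))" using growth \<epsilon> by (intro mult_left_mono) auto
    also have "\<dots> = D * Q ^ N * (\<epsilon> * Q) ^ k" by (simp add: power_add power_mult_distrib)
    also have "\<dots> \<le> D * Q ^ N * (1/2) ^ k"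
      using D Q \<epsilon> contraction by (intro mult_left_mono power_mono) auto
    finally show ?thesis using spec[OF iter[of k], of N] by linarith
  qed
  have "(\<lambda>k. 2 * A + D * Q ^ N * (1/2::real) ^ k) \<longlonglongrightarrow> 2 * A + D * Q ^ N * 0"
    by (intro tendsto_intros) simp
  then show ?thesis using bound by (intro LIMSEQ_le_const) auto
qed

section \<open>Weighted sequence spaces\<close>

definition weighted_summable :: "(int \<Rightarrow> real) \<Rightarrow> real \<Rightarrow> (int \<Rightarrow> real) \<Rightarrow> bool" where
  "weighted_summable w p x \<longleftrightarrow> (\<lambda>n. w n * x n powr p) summable_on UNIV"

lemma weighted_summable_mono:
  assumes "weighted_summable w p y" "\<And>n. 0 \<le> x n" "\<And>n. x n \<le> y n" "\<And>n. 0 \<le> w n" "0 \<le> p"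
  shows "weighted_summable w p x"
  using assms(1) unfolding weighted_summable_def
proof (rule summable_on_comparison_test)
  show "w n * x n powr p \<le> w n * y n powr p" for n
    using assms by (simp add: mult_left_mono powr_mono2)
  show "0 \<le> w n * x n powr p" for n
    using assms by simp
qed

lemma weighted_summable_add:
  assumes x: "weighted_summable w p x" and y: "weighted_summable w p y"
    and "\<And>n. 0 \<le> x n" "\<And>n. 0 \<le> y n" "\<And>n. 0 \<le> w n" "0 \<le> p"
  shows "weighted_summable w p (\<lambda>n. x n + y n)"
proof -
  have "(\<lambda>n. 2 powr p * (w n * x n powr p + w n * y n powr p)) summable_on UNIV"
    using x y unfolding weighted_summable_def by (intro summable_on_cmult_right summable_on_add)
  moreover have "w n * (x n + y n) powr p \<le> 2 powr p * (w n * x n powr p + w n * y n powr p)" for n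
  proof -
    have "sum_list [x n, y n] powr p
        \<le> real (length [x n, y n]) powr p * sum_list (map (\<lambda>x. x powr p) [x n, y n])"
      by (rule sum_list_powr_le) (use assms in auto)
    then have "(x n + y n) powr p \<le> 2 powr p * (x n powr p + y n powr p)" by simp
    from mult_left_mono[OF this assms(5)[of n]] show ?thesis by (simp add: algebra_simps)
  qed
  ultimately show ?thesis
    unfolding weighted_summable_def by (rule summable_on_comparison_test) (use assms in simp)
qed

lemma weighted_summable_cmult:
  assumes "weighted_summable w p x" "\<And>n. 0 \<le> x n" "0 \<le> c"
  shows "weighted_summable w p (\<lambda>n. c * x n)"
proof -
  have "(\<lambda>n. c powr p * (w n * x n powr p)) summable_on UNIV"
    using assms(1) unfolding weighted_summable_def by (rule summable_on_cmult_right)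
  then show ?thesis
    unfolding weighted_summable_def using assms by (simp add: powr_mult algebra_simps)
qed

lemma weighted_summable_shift:
  assumes x: "weighted_summable w p x" and "\<And>n. 0 \<le> x n" "\<And>n. 0 \<le> w n"
    and ratio: "\<And>n. w n \<le> R * w (n - 1)" and "0 \<le> R"
  shows "weighted_summable w p (\<lambda>n. x (n - 1))"
proof -
  have "bij_betw (\<lambda>n. n - 1) UNIV (UNIV :: int set)"
    by (intro bij_betwI[where g = "\<lambda>n. n + 1"]) auto
  then have "(\<lambda>n. w (n - 1) * x (n - 1) powr p) summable_on UNIV"
    using x unfolding weighted_summable_def by (subst summable_on_reindex_bij_betw) auto
  then have "(\<lambda>n. R * (w (n - 1) * x (n - 1) powr p)) summable_on UNIV"
    by (rule summable_on_cmult_right)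
  moreover have "w n * x (n - 1) powr p \<le> R * (w (n - 1) * x (n - 1) powr p)" for n
    using mult_right_mono[OF ratio[of n], of "x (n - 1) powr p"] by (simp add: mult.assoc)
  ultimately show ?thesis
    unfolding weighted_summable_def by (rule summable_on_comparison_test) (use assms in simp)
qed

lemma sum_le_weighted_infsum:
  assumes "weighted_summable w p x" "finite X" "\<And>n. 0 \<le> w n"
  shows "(\<Sum>n\<in>X. w n * x n powr p) \<le> infsum (\<lambda>n. w n * x n powr p) UNIV"
  using assms unfolding weighted_summable_def by (intro finite_sum_le_infsum) auto

lemma wnorm_p_finite_iff_weighted_summable:
  assumes "\<And>n. 0 \<le> w n" "1 \<le> p"
  shows "wnorm_p_finite w p a b \<longleftrightarrow> weighted_summable w p (\<lambda>n. norm (a n) + norm (b n))"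
proof
  assume ab: "wnorm_p_finite w p a b"
  have "weighted_summable w p (\<lambda>n. norm (a n))" "weighted_summable w p (\<lambda>n. norm (b n))"
    unfolding weighted_summable_def
    by (rule summable_on_comparison_test[OF ab[unfolded wnorm_p_finite_def]];
        use assms in \<open>simp add: mult_left_mono\<close>)+
  then show "weighted_summable w p (\<lambda>n. norm (a n) + norm (b n))"
    using assms by (intro weighted_summable_add) auto
next
  assume "weighted_summable w p (\<lambda>n. norm (a n) + norm (b n))"
  then have "weighted_summable w p (\<lambda>n. norm (a n))" "weighted_summable w p (\<lambda>n. norm (b n))"
    using assms by (auto intro: weighted_summable_mono)
  then show "wnorm_p_finite w p a b"
    unfolding wnorm_p_finite_def weighted_summable_def by (simp add: distrib_left summable_on_add)
qed

lemma card_symmetric_interval_le: "real (card {- int N..int N}) \<le> 3 ^ N"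
proof (induction N)
  case (Suc N)
  have "real (card {- int (Suc N)..int (Suc N)}) = real (card {- int N..int N}) + 2" by simp
  also have "\<dots> \<le> 3 ^ Suc N" using Suc one_le_power[of "3::real" N] by simp
  finally show ?case .
qed simp

lemma sum_shifted_symmetric_interval_le:
  fixes f :: "int \<Rightarrow> real"
  assumes "\<And>n. 0 \<le> f n" "\<bar>k\<bar> \<le> 1"
  shows "(\<Sum>n\<in>{- int N..int N}. f (n + k)) \<le> (\<Sum>n\<in>{- int (Suc N)..int (Suc N)}. f n)"
proof -
  have "(\<Sum>n\<in>{- int N..int N}. f (n + k)) = (\<Sum>m\<in>(\<lambda>n. n + k) ` {- int N..int N}. f m)"
    by (subst sum.reindex) (auto simp: inj_on_def)
  also have "\<dots> \<le> (\<Sum>n\<in>{- int (Suc N)..int (Suc N)}. f n)"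
    using assms by (intro sum_mono2) auto
  finally show ?thesis .
qed

lemma powr_recurrence_pointwise:
  fixes w a F G :: "int \<Rightarrow> real"
  assumes p: "0 \<le> p" and w: "0 \<le> w n"
    and up: "w n \<le> R * w (n - 1)" and down: "w n \<le> R * w (n + 1)"
    and nonneg: "0 \<le> \<tau>" "0 \<le> c" "0 \<le> a n" "0 \<le> F n" "\<And>m. 0 \<le> G m"
    and rec: "G n \<le> a n + \<tau> * F n + c * (G (n - 1) + G n + G (n + 1))"
  shows "w n * G n powr p \<le> 5 powr p * (w n * a n powr p + \<tau> powr p * (w n * F n powr p))
    + (5 * c) powr p * (R * (w (n - 1) * G (n - 1) powr p) + w n * G n powr p
                        + R * (w (n + 1) * G (n + 1) powr p))"
proof -
  let ?xs = "[a n, \<tau> * F n, c * G (n - 1), c * G n, c * G (n + 1)]"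
  have "G n powr p \<le> sum_list ?xs powr p"
    using rec nonneg p by (intro powr_mono2) (auto simp: algebra_simps)
  also have "\<dots> \<le> real (length ?xs) powr p * sum_list (map (\<lambda>x. x powr p) ?xs)"
    by (rule sum_list_powr_le) (use p nonneg in auto)
  also have "\<dots> = 5 powr p * (a n powr p + \<tau> powr p * F n powr p)
      + (5 * c) powr p * (G (n - 1) powr p + G n powr p + G (n + 1) powr p)"
    using nonneg by (simp add: powr_mult algebra_simps)
  finally have "w n * G n powr p \<le> w n * (5 powr p * (a n powr p + \<tau> powr p * F n powr p)
      + (5 * c) powr p * (G (n - 1) powr p + G n powr p + G (n + 1) powr p))"
    using w by (rule mult_left_mono)
  also have "\<dots> = 5 powr p * (w n * a n powr p + \<tau> powr p * (w n * F n powr p))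
      + (5 * c) powr p * (w n * G (n - 1) powr p + w n * G n powr p + w n * G (n + 1) powr p)"
    by (simp add: algebra_simps)
  also have "w n * G (n - 1) powr p \<le> R * (w (n - 1) * G (n - 1) powr p)"
    using up by (simp add: mult.assoc[symmetric] mult_right_mono)
  also have "w n * G (n + 1) powr p \<le> R * (w (n + 1) * G (n + 1) powr p)"
    using down by (simp add: mult.assoc[symmetric] mult_right_mono)
  finally show ?thesis by (simp add: mult_left_mono)
qed

definition weighted_partial_sum :: "(int \<Rightarrow> real) \<Rightarrow> real \<Rightarrow> (int \<Rightarrow> real) \<Rightarrow> nat \<Rightarrow> real" where
  "weighted_partial_sum w p x N = (\<Sum>n\<in>{- int N..int N}. w n * x n powr p)"

lemma weighted_partial_sum_nonneg: "(\<And>n. 0 \<le> w n) \<Longrightarrow> 0 \<le> weighted_partial_sum w p x N"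
  unfolding weighted_partial_sum_def by (intro sum_nonneg) simp

lemma weighted_partial_sum_recurrence:
  fixes w a F G :: "int \<Rightarrow> real"
  assumes p: "0 \<le> p" and w: "\<And>n. 0 \<le> w n" and R: "0 \<le> R"
    and up: "\<And>n. w (n + 1) \<le> R * w n" and down: "\<And>n. w n \<le> R * w (n + 1)"
    and nonneg: "0 \<le> \<tau>" "0 \<le> c" "\<And>n. 0 \<le> a n" "\<And>n. 0 \<le> F n" "\<And>n. 0 \<le> G n"
    and rec: "\<And>n. G n \<le> a n + \<tau> * F n + c * (G (n - 1) + G n + G (n + 1))"
    and a: "weighted_summable w p a" and F: "weighted_summable w p F"
  shows "weighted_partial_sum w p G N
    \<le> 5 powr p * (infsum (\<lambda>n. w n * a n powr p) UNIV + \<tau> powr p * infsum (\<lambda>n. w n * F n powr p) UNIV)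
      + (5 * c) powr p * (2 * R + 1) * weighted_partial_sum w p G (Suc N)"
proof -
  let ?I = "{- int N..int N}" and ?S = "weighted_partial_sum w p G (Suc N)"
  have shifted: "(\<Sum>n\<in>?I. w (n + k) * G (n + k) powr p) \<le> ?S" if "\<bar>k\<bar> \<le> 1" for k
    unfolding weighted_partial_sum_def
    by (rule sum_shifted_symmetric_interval_le[where f = "\<lambda>n. w n * G n powr p"]) (use w that in auto)
  have "weighted_partial_sum w p G N \<le> (\<Sum>n\<in>?I. 5 powr p * (w n * a n powr p + \<tau> powr p * (w n * F n powr p))
      + (5 * c) powr p * (R * (w (n - 1) * G (n - 1) powr p) + w n * G n powr p
                          + R * (w (n + 1) * G (n + 1) powr p)))"
    unfolding weighted_partial_sum_def
  proof (rule sum_mono)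
    fix n
    show "w n * G n powr p \<le> 5 powr p * (w n * a n powr p + \<tau> powr p * (w n * F n powr p))
      + (5 * c) powr p * (R * (w (n - 1) * G (n - 1) powr p) + w n * G n powr p
                          + R * (w (n + 1) * G (n + 1) powr p))"
      by (rule powr_recurrence_pointwise) (use p w up[of "n - 1"] down nonneg rec in auto)
  qed
  also have "\<dots> = 5 powr p * ((\<Sum>n\<in>?I. w n * a n powr p) + \<tau> powr p * (\<Sum>n\<in>?I. w n * F n powr p))
      + (5 * c) powr p * (R * (\<Sum>n\<in>?I. w (n + - 1) * G (n + - 1) powr p)
         + (\<Sum>n\<in>?I. w (n + 0) * G (n + 0) powr p) + R * (\<Sum>n\<in>?I. w (n + 1) * G (n + 1) powr p))"
    by (simp add: sum.distrib flip: sum_distrib_left)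
  also have "\<dots> \<le> 5 powr p * (infsum (\<lambda>n. w n * a n powr p) UNIV + \<tau> powr p * infsum (\<lambda>n. w n * F n powr p) UNIV)
      + (5 * c) powr p * (R * ?S + ?S + R * ?S)"
    using sum_le_weighted_infsum[OF a _ w] sum_le_weighted_infsum[OF F _ w] R
      shifted[of "-1", simplified] shifted[of 0, simplified] shifted[of 1, simplified]
    by (intro add_mono mult_left_mono) auto
  finally show ?thesis by (simp add: algebra_simps)
qed

lemma weighted_partial_sum_le_geometric:
  assumes p: "0 \<le> p" and w: "\<And>n. 0 \<le> w n" and R: "1 \<le> R"
    and up: "\<And>n. w (n + 1) \<le> R * w n" and down: "\<And>n. w n \<le> R * w (n + 1)"
    and x: "\<And>n. 0 \<le> x n" "\<And>n. x n \<le> C"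
  shows "weighted_partial_sum w p x N \<le> (w 0 * C powr p) * (3 * R) ^ N"
proof -
  have "weighted_partial_sum w p x N \<le> (\<Sum>n\<in>{- int N..int N}. w 0 * R ^ N * C powr p)"
    unfolding weighted_partial_sum_def
  proof (rule sum_mono)
    fix n :: int assume n: "n \<in> {- int N..int N}"
    have "w n \<le> w 0 * R ^ nat \<bar>n\<bar>" using R by (intro le_geometric_of_ratio_bound up down) auto
    also have "\<dots> \<le> w 0 * R ^ N" using n R w[of 0] by (intro mult_left_mono power_increasing) auto
    finally show "w n * x n powr p \<le> w 0 * R ^ N * C powr p"
      using x p w[of n] by (intro mult_mono powr_mono2) auto
  qed
  also have "\<dots> \<le> 3 ^ N * (w 0 * R ^ N * C powr p)"
    using card_symmetric_interval_le[of N] w[of 0] R by (simp add: mult_right_mono)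
  also have "\<dots> = (w 0 * C powr p) * (3 * R) ^ N" by (simp add: power_mult_distrib)
  finally show ?thesis .
qed

lemma weighted_summable_of_bounded_partial_sums:
  assumes "\<And>N. weighted_partial_sum w p x N \<le> A" "\<And>n. 0 \<le> w n"
  shows "weighted_summable w p x"
  unfolding weighted_summable_def
proof (rule nonneg_bdd_above_summable_on)
  show "0 \<le> w n * x n powr p" for n using assms(2)[of n] by simp
  have "sum (\<lambda>n. w n * x n powr p) X \<le> A" if "finite X" for X
  proof -
    obtain k where "abs ` X \<subseteq> {..k}" using \<open>finite X\<close> finite_int_iff_bounded_le by blast
    then have "X \<subseteq> {- int (nat k)..int (nat k)}" by force
    then have "sum (\<lambda>n. w n * x n powr p) X \<le> weighted_partial_sum w p x (nat k)"
      unfolding weighted_partial_sum_def using assms(2) by (intro sum_mono2) auto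
    then show ?thesis using assms(1) by (meson order_trans)
  qed
  then show "bdd_above (sum (\<lambda>n. w n * x n powr p) ` {F. F \<subseteq> UNIV \<and> finite F})"
    by (auto intro!: bdd_aboveI)
qed

lemma powr_contraction_of_small:
  fixes c R p :: real
  assumes c: "0 \<le> c" "c \<le> 1 / (10 * (2 * R + 1) * (3 * R + 1))" and R: "1 \<le> R" and p: "1 \<le> p"
  shows "(5 * c) powr p * (2 * R + 1) * (3 * R) \<le> 1/2"
proof -
  have "0 < 10 * (2 * R + 1) * (3 * R + 1)" using R by simp
  then have "c * (10 * (2 * R + 1) * (3 * R + 1)) \<le> 1" using c pos_le_divide_eq by blast
  then have bound: "5 * c * ((2 * R + 1) * (3 * R + 1)) \<le> 1/2" by (simp add: algebra_simps)
  have "1 \<le> (2 * R + 1) * (3 * R + 1)" using mult_mono[of 1 "2 * R + 1" 1 "3 * R + 1"] R by simp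
  from mult_left_mono[OF this, of "5 * c"] have "5 * c \<le> 1" using bound c by simp
  then have pc: "(5 * c) powr p \<le> 5 * c"
  proof (cases "c = 0")
    case False
    then show ?thesis using c p \<open>5 * c \<le> 1\<close> by (intro powr_le_one_le) auto
  qed simp
  have "(2 * R + 1) * (3 * R) \<le> (2 * R + 1) * (3 * R + 1)" using R by simp
  then have "(5 * c) powr p * ((2 * R + 1) * (3 * R)) \<le> (5 * c) * ((2 * R + 1) * (3 * R + 1))"
    using pc R c by (intro mult_mono) auto
  with bound have "(5 * c) powr p * ((2 * R + 1) * (3 * R)) \<le> 1/2" by linarith
  then show ?thesis by (simp only: mult.assoc)
qed

lemma weighted_summable_of_recurrence:
  fixes w a F G :: "int \<Rightarrow> real"
  assumes p: "1 \<le> p" and w: "\<And>n. 0 \<le> w n" and R: "1 \<le> R"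
    and up: "\<And>n. w (n + 1) \<le> R * w n" and down: "\<And>n. w n \<le> R * w (n + 1)"
    and F: "weighted_summable w p F" and F_nonneg: "\<And>n. 0 \<le> F n" and K: "0 \<le> K" and \<tau>: "0 \<le> \<tau>"
    and small: "\<tau> * K \<le> 1 / (10 * (2 * R + 1) * (3 * R + 1))"
    and a: "weighted_summable w p a" and a_nonneg: "\<And>n. 0 \<le> a n"
    and G_nonneg: "\<And>n. 0 \<le> G n" and G_le: "\<And>n. G n \<le> C"
    and rec: "\<And>n. G n \<le> a n + \<tau> * (F n + K * (G (n - 1) + G n + G (n + 1)))"
  shows "weighted_summable w p G"
proof -
  define A where "A = 5 powr p * (infsum (\<lambda>n. w n * a n powr p) UNIV
    + \<tau> powr p * infsum (\<lambda>n. w n * F n powr p) UNIV)"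
  have A: "0 \<le> A"
    unfolding A_def using w by (intro mult_nonneg_nonneg add_nonneg_nonneg infsum_nonneg) auto
  have "weighted_partial_sum w p G N \<le> 2 * A" for N
  proof (rule le_of_contracting_recurrence[OF _ _ A])
    show "weighted_partial_sum w p G N \<le> A + (5 * (\<tau> * K)) powr p * (2 * R + 1) * weighted_partial_sum w p G (Suc N)"
      for N
      unfolding A_def using p R \<tau> K rec
      by (intro weighted_partial_sum_recurrence[where w = w and R = R and G = G and a = a and F = F,
            OF _ w _ up down _ _ a_nonneg F_nonneg G_nonneg _ a F])
         (auto simp: algebra_simps)
    show "weighted_partial_sum w p G N \<le> (w 0 * C powr p) * (3 * R) ^ N" for N
      using p R by (intro weighted_partial_sum_le_geometric[where w = w and R = R and x = G, OF _ w _ up down G_nonneg G_le]) auto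
    show "(5 * (\<tau> * K)) powr p * (2 * R + 1) * (3 * R) \<le> 1/2"
      using powr_contraction_of_small[OF _ small R p] \<tau> K by simp
  qed (use R w in \<open>simp_all add: weighted_partial_sum_nonneg\<close>)
  then show ?thesis using w by (rule weighted_summable_of_bounded_partial_sums)
qed

definition weighted_bounded :: "(int \<Rightarrow> real) \<Rightarrow> (int \<Rightarrow> real) \<Rightarrow> bool" where
  "weighted_bounded v x \<longleftrightarrow> bdd_above (range (\<lambda>n. v n * x n))"

lemma weighted_bounded_mono:
  assumes "weighted_bounded v y" "\<And>n. x n \<le> y n" "\<And>n. 0 \<le> v n"
  shows "weighted_bounded v x"
proof -
  obtain M where "\<And>n. v n * y n \<le> M" using assms(1) unfolding weighted_bounded_def bdd_above_def by auto
  then have "v n * x n \<le> M" for n using assms(2,3) by (meson mult_left_mono order_trans)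
  then show ?thesis unfolding weighted_bounded_def by (intro bdd_aboveI) auto
qed

definition weighted_partial_max :: "(int \<Rightarrow> real) \<Rightarrow> (int \<Rightarrow> real) \<Rightarrow> nat \<Rightarrow> real" where
  "weighted_partial_max v x N = Max ((\<lambda>n. v n * x n) ` {- int N..int N})"

lemma weighted_partial_max_ge: "n \<in> {- int N..int N} \<Longrightarrow> v n * x n \<le> weighted_partial_max v x N"
  unfolding weighted_partial_max_def by (rule Max_ge) auto

lemma weighted_partial_max_le:
  "(\<And>n. n \<in> {- int N..int N} \<Longrightarrow> v n * x n \<le> M) \<Longrightarrow> weighted_partial_max v x N \<le> M"
  unfolding weighted_partial_max_def by (rule Max.boundedI) auto

lemma weighted_partial_max_recurrence:
  fixes v a F G :: "int \<Rightarrow> real"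
  assumes v: "\<And>n. 0 \<le> v n" and R: "0 \<le> R"
    and up: "\<And>n. v (n + 1) \<le> R * v n" and down: "\<And>n. v n \<le> R * v (n + 1)"
    and nonneg: "0 \<le> \<tau>" "0 \<le> c" "\<And>n. 0 \<le> G n"
    and rec: "\<And>n. G n \<le> a n + \<tau> * F n + c * (G (n - 1) + G n + G (n + 1))"
    and a: "\<And>n. v n * a n \<le> Aa" and F: "\<And>n. v n * F n \<le> AF"
  shows "weighted_partial_max v G N \<le> Aa + \<tau> * AF + c * (2 * R + 1) * weighted_partial_max v G (Suc N)"
proof (rule weighted_partial_max_le)
  let ?S = "weighted_partial_max v G (Suc N)"
  fix n assume n: "n \<in> {- int N..int N}"
  have neighbour: "v n * G m \<le> R * ?S" if "m = n - 1 \<or> m = n + 1" for m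
  proof -
    have "v n \<le> R * v m" using that up[of "n - 1"] down[of n] by auto
    then have "v n * G m \<le> R * (v m * G m)" using nonneg(3)[of m] by (simp add: mult.assoc[symmetric] mult_right_mono)
    also have "\<dots> \<le> R * ?S" using that n R by (intro mult_left_mono weighted_partial_max_ge) auto
    finally show ?thesis .
  qed
  have "v n * G n \<le> v n * (a n + \<tau> * F n + c * (G (n - 1) + G n + G (n + 1)))"
    using rec[of n] v[of n] by (rule mult_left_mono)
  also have "\<dots> = v n * a n + \<tau> * (v n * F n) + c * (v n * G (n - 1) + v n * G n + v n * G (n + 1))"
    by (simp add: algebra_simps)
  also have "\<dots> \<le> Aa + \<tau> * AF + c * (R * ?S + ?S + R * ?S)"
    using a[of n] F[of n] neighbour weighted_partial_max_ge[of n "Suc N"] n nonneg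
    by (intro add_mono mult_left_mono) auto
  finally show "v n * G n \<le> Aa + \<tau> * AF + c * (2 * R + 1) * ?S" by (simp add: algebra_simps)
qed

lemma weighted_partial_max_le_geometric:
  assumes v: "\<And>n. 0 \<le> v n" and R: "1 \<le> R"
    and up: "\<And>n. v (n + 1) \<le> R * v n" and down: "\<And>n. v n \<le> R * v (n + 1)"
    and x: "\<And>n. 0 \<le> x n" "\<And>n. x n \<le> C"
  shows "weighted_partial_max v x N \<le> (v 0 * C) * R ^ N"
proof (rule weighted_partial_max_le)
  fix n assume n: "n \<in> {- int N..int N}"
  have "v n \<le> v 0 * R ^ nat \<bar>n\<bar>" using R by (intro le_geometric_of_ratio_bound up down) auto
  also have "\<dots> \<le> v 0 * R ^ N" using n R v[of 0] by (intro mult_left_mono power_increasing) auto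
  finally show "v n * x n \<le> (v 0 * C) * R ^ N"
    using x v[of n] mult_mono[of "v n" "v 0 * R ^ N" "x n" C] by (simp add: algebra_simps)
qed

lemma weighted_bounded_of_recurrence:
  fixes v a F G :: "int \<Rightarrow> real"
  assumes v: "\<And>n. 0 \<le> v n" and R: "1 \<le> R"
    and up: "\<And>n. v (n + 1) \<le> R * v n" and down: "\<And>n. v n \<le> R * v (n + 1)"
    and F: "weighted_bounded v F" and F_nonneg: "\<And>n. 0 \<le> F n" and K: "0 \<le> K" and \<tau>: "0 \<le> \<tau>"
    and small: "\<tau> * K \<le> 1 / (2 * (2 * R + 1) * (R + 1))"
    and a: "weighted_bounded v a" and a_nonneg: "\<And>n. 0 \<le> a n"
    and G_nonneg: "\<And>n. 0 \<le> G n" and G_le: "\<And>n. G n \<le> C"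
    and rec: "\<And>n. G n \<le> a n + \<tau> * (F n + K * (G (n - 1) + G n + G (n + 1)))"
  shows "weighted_bounded v G"
proof -
  obtain Aa where Aa: "\<And>n. v n * a n \<le> Aa" using a unfolding weighted_bounded_def bdd_above_def by auto
  obtain AF where AF: "\<And>n. v n * F n \<le> AF" using F unfolding weighted_bounded_def bdd_above_def by auto
  have "0 \<le> Aa + \<tau> * AF" using Aa[of 0] AF[of 0] v[of 0] a_nonneg[of 0] F_nonneg[of 0] \<tau>
    by (meson add_nonneg_nonneg mult_nonneg_nonneg order_trans)
  have "0 < 2 * (2 * R + 1) * (R + 1)" using R by simp
  then have "\<tau> * K * (2 * (2 * R + 1) * (R + 1)) \<le> 1" using small pos_le_divide_eq by blast
  then have "\<tau> * K * (2 * R + 1) * (R + 1) \<le> 1/2" by (simp add: algebra_simps)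
  moreover have "\<tau> * K * (2 * R + 1) * R \<le> \<tau> * K * (2 * R + 1) * (R + 1)"
    using \<tau> K R by (intro mult_left_mono) auto
  ultimately have contraction: "\<tau> * K * (2 * R + 1) * R \<le> 1/2" by linarith
  have "weighted_partial_max v G N \<le> 2 * (Aa + \<tau> * AF)" for N
  proof (rule le_of_contracting_recurrence[OF _ _ \<open>0 \<le> Aa + \<tau> * AF\<close> _ _ R contraction])
    show "weighted_partial_max v G N \<le> Aa + \<tau> * AF + \<tau> * K * (2 * R + 1) * weighted_partial_max v G (Suc N)"
      for N
      using R \<tau> K rec
      by (intro weighted_partial_max_recurrence[where v = v and R = R and G = G and a = a and F = F,
            OF v _ up down _ _ G_nonneg _ Aa AF]) (auto simp: algebra_simps)
    show "weighted_partial_max v G N \<le> (v 0 * C) * R ^ N" for N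
      by (rule weighted_partial_max_le_geometric[where v = v and R = R and x = G, OF v R up down G_nonneg G_le])
    show "0 \<le> weighted_partial_max v G N" for N
    proof -
      have "0 \<le> v 0 * G 0" using v[of 0] G_nonneg[of 0] by simp
      moreover have "v 0 * G 0 \<le> weighted_partial_max v G N" by (rule weighted_partial_max_ge) simp
      ultimately show ?thesis by linarith
    qed
  qed (use \<tau> K R in simp)
  moreover have "v n * G n \<le> weighted_partial_max v G (nat \<bar>n\<bar>)" for n by (rule weighted_partial_max_ge) auto
  ultimately have "v n * G n \<le> 2 * (Aa + \<tau> * AF)" for n by (meson order_trans)
  then show ?thesis unfolding weighted_bounded_def by (intro bdd_aboveI) auto
qed

section \<open>Propagation in time\<close>

lemma norm_diff_le_of_vector_derivative_bound:
  fixes f :: "real \<Rightarrow> 'b::real_normed_vector"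
  assumes deriv: "\<And>r. r \<in> {a..b} \<Longrightarrow> (f has_vector_derivative f' r) (at r)"
    and bound: "\<And>r. r \<in> {a..b} \<Longrightarrow> norm (f' r) \<le> M"
    and "x \<in> {a..b}" "y \<in> {a..b}"
  shows "norm (f x - f y) \<le> M * \<bar>x - y\<bar>"
proof -
  have "norm (f x - f y) \<le> M * norm (x - y)"
  proof (rule differentiable_bound[where f' = "\<lambda>r h. h *\<^sub>R f' r"])
    fix r assume r: "r \<in> {a..b}"
    show "(f has_derivative (\<lambda>h. h *\<^sub>R f' r)) (at r within {a..b})"
      using deriv[OF r] unfolding has_vector_derivative_def by (rule has_derivative_at_withinI)
    have "onorm (\<lambda>h::real. h *\<^sub>R f' r) = norm (f' r)"
      using onorm_scaleR_left[OF bounded_linear_ident] onorm_id[where 'a=real] by (simp add: id_def)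
    then show "onorm (\<lambda>h. h *\<^sub>R f' r) \<le> M" using bound[OF r] by simp
  qed (use assms in auto)
  then show ?thesis by simp
qed

definition deviation ::
  "(int \<Rightarrow> complex) \<Rightarrow> (int \<Rightarrow> complex) \<Rightarrow> (int \<Rightarrow> complex) \<Rightarrow> (int \<Rightarrow> complex) \<Rightarrow> int \<Rightarrow> real" where
  "deviation a b a0 b0 n = norm (a n - a0 n) + norm (b n - b0 n)"

lemma deviation_nonneg: "0 \<le> deviation a b a0 b0 n"
  by (simp add: deviation_def)

locale deviation_dynamics =
  fixes x y x' y' :: "real \<Rightarrow> int \<Rightarrow> complex" and x0 y0 :: "int \<Rightarrow> complex"
    and b K C :: real and F :: "int \<Rightarrow> real"
  assumes K_nonneg: "0 \<le> K" and F_nonneg: "\<And>n. 0 \<le> F n"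
    and deriv_x: "\<And>s n. s \<in> {-b..b} \<Longrightarrow> ((\<lambda>r. x r n) has_vector_derivative x' s n) (at s)"
    and deriv_y: "\<And>s n. s \<in> {-b..b} \<Longrightarrow> ((\<lambda>r. y r n) has_vector_derivative y' s n) (at s)"
    and speed: "\<And>s n. s \<in> {-b..b} \<Longrightarrow> norm (x' s n) + norm (y' s n)
        \<le> F n + K * (deviation (x s) (y s) x0 y0 (n - 1) + deviation (x s) (y s) x0 y0 n
                     + deviation (x s) (y s) x0 y0 (n + 1))"
    and deviation_le: "\<And>s n. s \<in> {-b..b} \<Longrightarrow> deviation (x s) (y s) x0 y0 n \<le> C"
begin

abbreviation dev :: "real \<Rightarrow> int \<Rightarrow> real" where
  "dev s \<equiv> deviation (x s) (y s) x0 y0"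

lemma deviation_le_of_speed_bound:
  assumes I: "{l..u} \<subseteq> {-b..b}" and s: "s \<in> {l..u}" and t0: "t0 \<in> {l..u}"
    and speed_le: "\<And>r. r \<in> {l..u} \<Longrightarrow> norm (x' r n) \<le> M \<and> norm (y' r n) \<le> M"
  shows "dev s n \<le> dev t0 n + 2 * \<bar>s - t0\<bar> * M"
proof -
  have "norm (x s n - x t0 n) \<le> M * \<bar>s - t0\<bar>"
    by (rule norm_diff_le_of_vector_derivative_bound[where f = "\<lambda>r. x r n"])
       (use s t0 speed_le deriv_x[OF subsetD[OF I]] in auto)
  moreover have "norm (y s n - y t0 n) \<le> M * \<bar>s - t0\<bar>"
    by (rule norm_diff_le_of_vector_derivative_bound[where f = "\<lambda>r. y r n"])
       (use s t0 speed_le deriv_y[OF subsetD[OF I]] in auto)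
  moreover have "norm (x s n - x0 n) \<le> norm (x t0 n - x0 n) + norm (x s n - x t0 n)"
    "norm (y s n - y0 n) \<le> norm (y t0 n - y0 n) + norm (y s n - y t0 n)"
    using norm_triangle_ineq[of "x t0 n - x0 n" "x s n - x t0 n"]
      norm_triangle_ineq[of "y t0 n - y0 n" "y s n - y t0 n"] by simp_all
  ultimately show ?thesis by (simp add: deviation_def algebra_simps)
qed

lemma sup_deviation_recurrence:
  assumes t0: "t0 \<in> {-b..b}" and t: "t \<in> {-b..b}"
  defines "G \<equiv> \<lambda>n. SUP s \<in> {min t0 t..max t0 t}. dev s n"
  shows "dev t n \<le> G n" and "0 \<le> G n" and "G n \<le> C"
    and "G n \<le> dev t0 n + 2 * \<bar>t - t0\<bar> * (F n + K * (G (n - 1) + G n + G (n + 1)))"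
proof -
  define I where "I = {min t0 t..max t0 t}"
  have I: "I \<subseteq> {-b..b}" "t0 \<in> I" "t \<in> I" using t0 t by (auto simp: I_def)
  have dev_le_G: "dev s m \<le> G m" if "s \<in> I" for s m
    unfolding G_def I_def[symmetric] using that I(1) deviation_le
    by (intro cSup_upper bdd_aboveI[where M = C]) auto
  show "dev t n \<le> G n" by (rule dev_le_G[OF I(3)])
  show "0 \<le> G n" using dev_le_G[OF I(2)] deviation_nonneg order_trans by blast
  show "G n \<le> C" unfolding G_def I_def[symmetric] using I deviation_le by (intro cSup_least) auto
  define M where "M = F n + K * (G (n - 1) + G n + G (n + 1))"
  have M: "0 \<le> M" unfolding M_def using F_nonneg K_nonneg dev_le_G[OF I(2)] deviation_nonneg
    by (meson add_nonneg_nonneg mult_nonneg_nonneg order_trans)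
  have speed_le: "norm (x' r n) \<le> M \<and> norm (y' r n) \<le> M" if "r \<in> I" for r
  proof -
    have "K * (dev r (n - 1) + dev r n + dev r (n + 1)) \<le> K * (G (n - 1) + G n + G (n + 1))"
      using K_nonneg dev_le_G[OF that] by (intro mult_left_mono add_mono) auto
    then have "norm (x' r n) + norm (y' r n) \<le> M" using speed[of r n] I(1) that by (auto simp: M_def)
    then show ?thesis by (smt (verit) norm_ge_zero)
  qed
  have "dev s n \<le> dev t0 n + 2 * \<bar>t - t0\<bar> * M" if s: "s \<in> I" for s
  proof -
    have "\<bar>s - t0\<bar> \<le> \<bar>t - t0\<bar>" using s by (auto simp: I_def)
    then have "2 * \<bar>s - t0\<bar> * M \<le> 2 * \<bar>t - t0\<bar> * M" using M by (simp add: mult_right_mono)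
    moreover have "dev s n \<le> dev t0 n + 2 * \<bar>s - t0\<bar> * M"
      using I s speed_le unfolding I_def by (intro deviation_le_of_speed_bound) auto
    ultimately show ?thesis by linarith
  qed
  then have "(SUP s \<in> I. dev s n) \<le> dev t0 n + 2 * \<bar>t - t0\<bar> * M"
    using I by (intro cSup_least) auto
  then show "G n \<le> dev t0 n + 2 * \<bar>t - t0\<bar> * (F n + K * (G (n - 1) + G n + G (n + 1)))"
    by (simp add: G_def I_def M_def)
qed

context
  fixes Fin :: "(int \<Rightarrow> real) \<Rightarrow> bool" and \<delta> :: real
  assumes Fin_mono: "\<And>f g. Fin g \<Longrightarrow> (\<And>n. 0 \<le> f n) \<Longrightarrow> (\<And>n. f n \<le> g n) \<Longrightarrow> Fin f"
    and Fin_step: "\<And>a G \<tau> C'. 0 \<le> \<tau> \<Longrightarrow> \<tau> * K \<le> \<delta> \<Longrightarrow> Fin a \<Longrightarrow> (\<And>n. 0 \<le> a n) \<Longrightarrow>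
        (\<And>n. 0 \<le> G n) \<Longrightarrow> (\<And>n. G n \<le> C') \<Longrightarrow>
        (\<And>n. G n \<le> a n + \<tau> * (F n + K * (G (n - 1) + G n + G (n + 1)))) \<Longrightarrow> Fin G"
begin

lemma deviation_short_step:
  assumes "t0 \<in> {-b..b}" "t \<in> {-b..b}" "2 * \<bar>t - t0\<bar> * K \<le> \<delta>" "Fin (dev t0)"
  shows "Fin (dev t)"
proof -
  define G where "G n = (SUP s \<in> {min t0 t..max t0 t}. dev s n)" for n
  have G: "\<And>n. dev t n \<le> G n" "\<And>n. 0 \<le> G n" "\<And>n. G n \<le> C"
    "\<And>n. G n \<le> dev t0 n + 2 * \<bar>t - t0\<bar> * (F n + K * (G (n - 1) + G n + G (n + 1)))"
    unfolding G_def by (rule sup_deviation_recurrence[OF assms(1,2)])+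
  then have "Fin G"
    using Fin_step[of "2 * \<bar>t - t0\<bar>" "dev t0" G C] assms(3,4) deviation_nonneg by simp
  then show ?thesis using Fin_mono[of G "dev t"] G(1) deviation_nonneg by blast
qed

lemma deviation_propagates:
  assumes \<delta>: "0 < \<delta>" and Fin0: "Fin (dev 0)" and t: "t \<in> {-b..b}"
  shows "Fin (dev t)"
proof -
  define h where "h = \<delta> / (2 * (K + 1))"
  have h: "0 < h" using \<delta> K_nonneg by (simp add: h_def)
  have step: "Fin (dev t)" if "t0 \<in> {-b..b}" "t \<in> {-b..b}" "\<bar>t - t0\<bar> \<le> h" "Fin (dev t0)" for t0 t
  proof (rule deviation_short_step[OF that(1,2) _ that(4)])
    have "2 * \<bar>t - t0\<bar> * K \<le> 2 * h * (K + 1)"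
      using that(3) K_nonneg by (intro mult_mono) auto
    also have "\<dots> = \<delta>" using K_nonneg by (simp add: h_def field_simps)
    finally show "2 * \<bar>t - t0\<bar> * K \<le> \<delta>" .
  qed
  have "\<forall>s\<in>{-b..b}. \<bar>s\<bar> \<le> real k * h \<longrightarrow> Fin (dev s)" for k
  proof (induction k)
    case 0
    then show ?case using Fin0 by simp
  next
    case (Suc k)
    show ?case
    proof (intro ballI impI)
      fix s assume s: "s \<in> {-b..b}" and "\<bar>s\<bar> \<le> real (Suc k) * h"
      define m where "m = real k * h"
      have m: "0 \<le> m" "\<bar>s\<bar> \<le> m + h"
        using h \<open>\<bar>s\<bar> \<le> real (Suc k) * h\<close> by (simp_all add: m_def algebra_simps)
      define s0 where "s0 = (if 0 \<le> s then min s m else max s (- m))"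
      have "s0 \<in> {-b..b}" "\<bar>s0\<bar> \<le> m" "\<bar>s - s0\<bar> \<le> h"
        unfolding s0_def using s m h by (auto simp: min_def max_def)
      then show "Fin (dev s)" using Suc.IH step[OF \<open>s0 \<in> {-b..b}\<close> s] unfolding m_def by blast
    qed
  qed
  moreover obtain k where "\<bar>t\<bar> / h \<le> real k" using real_arch_simple by blast
  then have "\<bar>t\<bar> \<le> real k * h" using h by (simp add: field_simps)
  ultimately show ?thesis using t by blast
qed

end

end

section \<open>The Ablowitz--Ladik system\<close>

lemma bounded_linear_apply_bcontfun:
  "bounded_linear (\<lambda>f :: 'a::topological_space \<Rightarrow>\<^sub>C 'b::real_normed_vector. apply_bcontfun f n)"
  by (rule bounded_linear_intro[where K = 1]) (auto intro: order_trans[OF norm_bounded])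

lemma has_vector_derivative_apply_bcontfun:
  assumes "(f has_vector_derivative f') (at t)"
  shows "((\<lambda>s. apply_bcontfun (f s) n) has_vector_derivative apply_bcontfun f' n) (at t)"
  using bounded_linear.has_derivative[OF bounded_linear_apply_bcontfun assms[unfolded has_vector_derivative_def]]
  by (simp add: has_vector_derivative_def)

lemma bcontfun_bounded_on_compact:
  fixes f :: "real \<Rightarrow> 'a::topological_space \<Rightarrow>\<^sub>C 'b::real_normed_vector"
  assumes "continuous_on S f" "compact S"
  obtains B where "\<And>s n. s \<in> S \<Longrightarrow> norm (f s n) \<le> B"
proof -
  obtain B where "\<And>s. s \<in> S \<Longrightarrow> norm (f s) \<le> B"
    using compact_imp_bounded[OF compact_continuous_image[OF assms]] unfolding bounded_iff by blast
  then show ?thesis using that norm_bounded order_trans by blast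
qed

lemma bounded_seqE:
  assumes "bounded_seq a"
  obtains B where "\<And>n. norm (a n) \<le> B"
  using assms unfolding bounded_seq_def bdd_above_def by auto

lemma power2_le_of_le_mult:
  fixes x y c :: real
  assumes "0 \<le> x" "x \<le> c * y"
  shows "x\<^sup>2 \<le> c\<^sup>2 * y\<^sup>2"
  using power_mono[OF assms(2,1), of 2] by (simp add: power_mult_distrib)

text \<open>The right-hand side of one Ablowitz--Ladik equation at site \<open>n\<close>, with \<open>y\<close> the value at \<open>n\<close>,
  \<open>x, z\<close> the neighbours and \<open>bb\<close> the value of the other field, compared with a reference state.
  The key decomposition is
  \<open>(1 - y bb)(x + z) - 2 y = (x - y) + (z - y) - (y0 bb0 + y0 (bb - bb0) + (y - y0) bb)(x + z)\<close>.\<close>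
lemma AL_nonlinearity_perturbation:
  fixes x y z x0 y0 z0 bb bb0 :: complex
  assumes "norm x \<le> B" "norm z \<le> B" "norm y0 \<le> B" "norm bb \<le> B" "0 \<le> B"
  shows "norm ((1 - y * bb) * (x + z) - 2 * y) \<le> norm (x0 - y0) + norm (y0 - z0) + 2 * B * (norm y0 * norm bb0)
     + (2 + 2 * B\<^sup>2) * (norm (x - x0) + norm (y - y0) + norm (z - z0) + norm (bb - bb0))"
proof -
  define P where "P = y0 * bb0 + y0 * (bb - bb0) + (y - y0) * bb"
  have decomposition: "(1 - y * bb) * (x + z) - 2 * y = (x - y) + (z - y) - P * (x + z)"
    by (simp add: P_def algebra_simps)
  have xy: "norm (x - y) \<le> norm (x0 - y0) + norm (x - x0) + norm (y - y0)"
    using norm_triangle_ineq4[of "(x0 - y0) + (x - x0)" "y - y0"] norm_triangle_ineq[of "x0 - y0" "x - x0"]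
    by (simp add: algebra_simps)
  have zy: "norm (z - y) \<le> norm (y0 - z0) + norm (z - z0) + norm (y - y0)"
    using norm_triangle_ineq4[of "(z - z0) - (y0 - z0)" "y - y0"] norm_triangle_ineq4[of "z - z0" "y0 - z0"]
    by (simp add: algebra_simps)
  have "norm (y0 * (bb - bb0)) \<le> B * norm (bb - bb0)" "norm ((y - y0) * bb) \<le> norm (y - y0) * B"
    using assms by (simp_all add: norm_mult mult_right_mono mult_left_mono)
  then have P: "norm P \<le> norm y0 * norm bb0 + B * norm (bb - bb0) + norm (y - y0) * B"
    using norm_triangle_ineq[of "y0 * bb0 + y0 * (bb - bb0)" "(y - y0) * bb"]
      norm_triangle_ineq[of "y0 * bb0" "y0 * (bb - bb0)"]
    unfolding P_def by (simp add: norm_mult)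
  have "norm (x + z) \<le> 2 * B" using assms norm_triangle_ineq[of x z] by linarith
  then have P_xz: "norm (P * (x + z)) \<le> (norm y0 * norm bb0 + B * norm (bb - bb0) + norm (y - y0) * B) * (2 * B)"
    unfolding norm_mult using P assms(5) by (intro mult_mono) auto
  have "norm ((1 - y * bb) * (x + z) - 2 * y) \<le> norm (x - y) + norm (z - y) + norm (P * (x + z))"
    unfolding decomposition
    using norm_triangle_ineq4[of "x - y + (z - y)" "P * (x + z)"] norm_triangle_ineq[of "x - y" "z - y"]
    by linarith
  also have "\<dots> \<le> norm (x0 - y0) + norm (y0 - z0) + 2 * B * (norm y0 * norm bb0)
     + (norm (x - x0) + 2 * norm (y - y0) + norm (z - z0)) + 2 * B\<^sup>2 * (norm (bb - bb0) + norm (y - y0))"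
    using xy zy P_xz by (simp add: algebra_simps power2_eq_square)
  also have "\<dots> \<le> norm (x0 - y0) + norm (y0 - z0) + 2 * B * (norm y0 * norm bb0)
     + (2 + 2 * B\<^sup>2) * (norm (x - x0) + norm (y - y0) + norm (z - z0) + norm (bb - bb0))"
    using mult_left_mono[of "norm (bb - bb0) + norm (y - y0)"
        "norm (x - x0) + norm (y - y0) + norm (z - z0) + norm (bb - bb0)" "2 * B\<^sup>2"]
    by (simp add: algebra_simps)
  finally show ?thesis .
qed

definition AL_forcing :: "real \<Rightarrow> (int \<Rightarrow> complex) \<Rightarrow> (int \<Rightarrow> complex) \<Rightarrow> int \<Rightarrow> real" where
  "AL_forcing B a b n = norm (a (n - 1) - a n) + norm (a n - a (n + 1))
     + norm (b (n - 1) - b n) + norm (b n - b (n + 1)) + 4 * B * (norm (a n) * norm (b n))"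

lemma AL_forcing_nonneg: "0 \<le> B \<Longrightarrow> 0 \<le> AL_forcing B a b n"
  by (simp add: AL_forcing_def)

lemma norm_eq_of_AL_equation:
  fixes z u v :: complex
  shows "- \<i> * z - u + v = 0 \<Longrightarrow> norm z = norm (u - v)"
    and "- \<i> * z + u - v = 0 \<Longrightarrow> norm z = norm (u - v)"
proof -
  have "norm z = norm (- \<i> * z)" by (simp add: norm_mult)
  then show "- \<i> * z - u + v = 0 \<Longrightarrow> norm z = norm (u - v)"
    and "- \<i> * z + u - v = 0 \<Longrightarrow> norm z = norm (u - v)"
    by (metis add_diff_cancel_left' add_diff_eq diff_add_cancel eq_iff_diff_eq_0 minus_diff_eq
        norm_minus_cancel)+
qed

lemma AL_speed_bound:
  fixes a b a' b' a0 b0 :: "int \<Rightarrow> complex"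
  assumes eq_a: "- \<i> * a' n - (1 - a n * b n) * (a (n - 1) + a (n + 1)) + 2 * a n = 0"
    and eq_b: "- \<i> * b' n + (1 - a n * b n) * (b (n - 1) + b (n + 1)) - 2 * b n = 0"
    and bounds: "\<And>m. norm (a m) \<le> B" "\<And>m. norm (b m) \<le> B" "\<And>m. norm (a0 m) \<le> B" "\<And>m. norm (b0 m) \<le> B"
  shows "norm (a' n) + norm (b' n) \<le> AL_forcing B a0 b0 n
    + (4 + 4 * B\<^sup>2) * (deviation a b a0 b0 (n - 1) + deviation a b a0 b0 n + deviation a b a0 b0 (n + 1))"
proof -
  have B: "0 \<le> B" using bounds(1)[of 0] norm_ge_zero order_trans by blast
  have "norm (a' n) = norm ((1 - a n * b n) * (a (n - 1) + a (n + 1)) - 2 * a n)"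
    using eq_a by (rule norm_eq_of_AL_equation(1))
  also have "\<dots> \<le> norm (a0 (n - 1) - a0 n) + norm (a0 n - a0 (n + 1)) + 2 * B * (norm (a0 n) * norm (b0 n))
      + (2 + 2 * B\<^sup>2) * (norm (a (n - 1) - a0 (n - 1)) + norm (a n - a0 n) + norm (a (n + 1) - a0 (n + 1))
                      + norm (b n - b0 n))"
    by (rule AL_nonlinearity_perturbation) (use bounds B in auto)
  finally have a': "norm (a' n) \<le> \<dots>" .
  have "norm (b' n) = norm ((1 - b n * a n) * (b (n - 1) + b (n + 1)) - 2 * b n)"
    using norm_eq_of_AL_equation(2)[OF eq_b] by (simp add: mult.commute)
  also have "\<dots> \<le> norm (b0 (n - 1) - b0 n) + norm (b0 n - b0 (n + 1)) + 2 * B * (norm (b0 n) * norm (a0 n))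
      + (2 + 2 * B\<^sup>2) * (norm (b (n - 1) - b0 (n - 1)) + norm (b n - b0 n) + norm (b (n + 1) - b0 (n + 1))
                      + norm (a n - a0 n))"
    by (rule AL_nonlinearity_perturbation) (use bounds B in auto)
  finally have b': "norm (b' n) \<le> \<dots>" .
  let ?d = "deviation a b a0 b0"
  have "(2 + 2 * B\<^sup>2) * (norm (a (n - 1) - a0 (n - 1)) + norm (a n - a0 n) + norm (a (n + 1) - a0 (n + 1))
          + norm (b n - b0 n))
      + (2 + 2 * B\<^sup>2) * (norm (b (n - 1) - b0 (n - 1)) + norm (b n - b0 n) + norm (b (n + 1) - b0 (n + 1))
          + norm (a n - a0 n))
      = (2 + 2 * B\<^sup>2) * (?d (n - 1) + 2 * ?d n + ?d (n + 1))"
    by (simp add: deviation_def algebra_simps)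
  also have "\<dots> \<le> (4 + 4 * B\<^sup>2) * (?d (n - 1) + ?d n + ?d (n + 1))"
    using mult_left_mono[of "?d (n - 1) + 2 * ?d n + ?d (n + 1)" "2 * (?d (n - 1) + ?d n + ?d (n + 1))"
        "2 + 2 * B\<^sup>2"]
    by (simp add: deviation_nonneg algebra_simps)
  finally show ?thesis
    using a' b' mult.commute[of "norm (b0 n)" "norm (a0 n)"] unfolding AL_forcing_def by argo
qed

lemma weighted_summable_AL_forcing:
  assumes p: "1 \<le> p" and w: "\<And>n. 0 \<le> w n" and down: "\<And>n. w n \<le> R * w (n - 1)"
    and "0 \<le> R" "0 \<le> B"
    and ab: "wnorm_p_finite w (2 * p) a b"
    and jumps: "wnorm_p_finite w p (\<lambda>n. a n - a (n + 1)) (\<lambda>n. b n - b (n + 1))"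
  shows "weighted_summable w p (AL_forcing B a b)"
proof -
  define J where "J n = norm (a n - a (n + 1)) + norm (b n - b (n + 1))" for n
  have J: "weighted_summable w p J" "\<And>n. 0 \<le> J n"
    using jumps wnorm_p_finite_iff_weighted_summable[OF w p] by (simp_all add: J_def[abs_def])
  have "(\<lambda>n. w n * (norm (a n) powr (2 * p) + norm (b n) powr (2 * p))) summable_on UNIV"
    using ab unfolding wnorm_p_finite_def .
  then have ab_prod: "weighted_summable w p (\<lambda>n. norm (a n) * norm (b n))"
    unfolding weighted_summable_def
    by (rule summable_on_comparison_test) (use w in \<open>simp_all add: mult_left_mono powr_mult_le_powr_double_add\<close>)
  have "AL_forcing B a b = (\<lambda>n. J (n - 1) + J n + 4 * B * (norm (a n) * norm (b n)))"
    by (simp add: fun_eq_iff AL_forcing_def J_def)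
  moreover have "weighted_summable w p (\<lambda>n. J (n - 1) + J n + 4 * B * (norm (a n) * norm (b n)))"
  proof (intro weighted_summable_add)
    show "weighted_summable w p (\<lambda>n. J (n - 1))"
      by (rule weighted_summable_shift[OF J(1) J(2) w down \<open>0 \<le> R\<close>])
    show "weighted_summable w p (\<lambda>n. 4 * B * (norm (a n) * norm (b n)))"
      by (rule weighted_summable_cmult[OF ab_prod]) (use \<open>0 \<le> B\<close> in auto)
  qed (use J w p \<open>0 \<le> B\<close> in auto)
  ultimately show ?thesis by simp
qed

lemma weighted_bounded_AL_forcing:
  assumes w: "\<And>n. 0 \<le> w n" and down: "\<And>n. w n \<le> R * w (n - 1)" and B: "0 \<le> B"
    and ab: "wnorm_inf_finite w a b"
    and jumps: "wnorm_inf_finite (\<lambda>n. (w n)\<^sup>2) (\<lambda>n. a n - a (n + 1)) (\<lambda>n. b n - b (n + 1))"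
  shows "weighted_bounded (\<lambda>n. (w n)\<^sup>2) (AL_forcing B a b)"
proof -
  define J where "J n = norm (a n - a (n + 1)) + norm (b n - b (n + 1))" for n
  obtain C1 where C1: "\<And>n. w n * (norm (a n) + norm (b n)) \<le> C1"
    using ab unfolding wnorm_inf_finite_def bdd_above_def by auto
  obtain C2 where C2: "\<And>n. (w n)\<^sup>2 * J n \<le> C2"
    using jumps unfolding wnorm_inf_finite_def bdd_above_def J_def by auto
  have "(w n)\<^sup>2 * AL_forcing B a b n \<le> R\<^sup>2 * C2 + C2 + 4 * B * (C1 * C1)" for n
  proof -
    have "(w n)\<^sup>2 * J (n - 1) \<le> (R\<^sup>2 * (w (n - 1))\<^sup>2) * J (n - 1)"
      by (rule mult_right_mono[OF power2_le_of_le_mult[OF w down[of n]]]) (simp add: J_def)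
    also have "\<dots> = R\<^sup>2 * ((w (n - 1))\<^sup>2 * J (n - 1))" by (simp add: mult.assoc)
    also have "\<dots> \<le> R\<^sup>2 * C2" using C2 by (simp add: mult_left_mono)
    finally have J_left: "(w n)\<^sup>2 * J (n - 1) \<le> R\<^sup>2 * C2" .
    have wa: "0 \<le> w n * norm (a n)" and wb: "0 \<le> w n * norm (b n)" using w[of n] by simp_all
    then have "w n * norm (a n) \<le> C1" "w n * norm (b n) \<le> C1"
      using C1[of n] by (simp_all add: distrib_left)
    then have "(w n * norm (a n)) * (w n * norm (b n)) \<le> C1 * C1"
      using wa wb by (intro mult_mono) auto
    then have "4 * B * ((w n)\<^sup>2 * (norm (a n) * norm (b n))) \<le> 4 * B * (C1 * C1)"
      using B by (intro mult_left_mono) (auto simp: power2_eq_square algebra_simps)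
    moreover have "(w n)\<^sup>2 * AL_forcing B a b n
        = (w n)\<^sup>2 * J (n - 1) + (w n)\<^sup>2 * J n + 4 * B * ((w n)\<^sup>2 * (norm (a n) * norm (b n)))"
      by (simp add: AL_forcing_def J_def algebra_simps)
    ultimately show ?thesis using J_left C2[of n] by linarith
  qed
  then show ?thesis unfolding weighted_bounded_def by (intro bdd_aboveI) auto
qed

locale ablowitz_ladik_solution =
  fixes \<alpha> \<beta> \<alpha>' \<beta>' :: "real \<Rightarrow> (int \<Rightarrow>\<^sub>C complex)" and T :: real
  assumes deriv: "\<And>t. t \<in> {-T<..<T} \<Longrightarrow>
        (\<alpha> has_vector_derivative \<alpha>' t) (at t) \<and> (\<beta> has_vector_derivative \<beta>' t) (at t)"
    and eq_\<alpha>: "\<And>t n. t \<in> {-T<..<T} \<Longrightarrow>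
        - \<i> * \<alpha>' t n - (1 - \<alpha> t n * \<beta> t n) * (\<alpha> t (n - 1) + \<alpha> t (n + 1)) + 2 * \<alpha> t n = 0"
    and eq_\<beta>: "\<And>t n. t \<in> {-T<..<T} \<Longrightarrow>
        - \<i> * \<beta>' t n + (1 - \<alpha> t n * \<beta> t n) * (\<beta> t (n - 1) + \<beta> t (n + 1)) - 2 * \<beta> t n = 0"
begin

lemma uniform_bound_on_Icc:
  assumes "{-b..b} \<subseteq> {-T<..<T}" "bounded_seq \<alpha>0" "bounded_seq \<beta>0"
  obtains B where "0 \<le> B" "\<And>n. norm (\<alpha>0 n) \<le> B" "\<And>n. norm (\<beta>0 n) \<le> B"
    "\<And>s n. s \<in> {-b..b} \<Longrightarrow> norm (\<alpha> s n) \<le> B" "\<And>s n. s \<in> {-b..b} \<Longrightarrow> norm (\<beta> s n) \<le> B"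
proof -
  have "(\<alpha> has_vector_derivative \<alpha>' s) (at s) \<and> (\<beta> has_vector_derivative \<beta>' s) (at s)"
    if "s \<in> {-b..b}" for s
    using deriv assms(1) that by blast
  then have "continuous_on {-b..b} \<alpha>" "continuous_on {-b..b} \<beta>"
    by (meson continuous_at_imp_continuous_on has_vector_derivative_continuous)+
  then obtain B\<alpha> B\<beta> where B\<alpha>: "\<And>s n. s \<in> {-b..b} \<Longrightarrow> norm (\<alpha> s n) \<le> B\<alpha>"
      and B\<beta>: "\<And>s n. s \<in> {-b..b} \<Longrightarrow> norm (\<beta> s n) \<le> B\<beta>"
    using bcontfun_bounded_on_compact[OF _ compact_Icc] by metis
  obtain B\<alpha>0 B\<beta>0 where B\<alpha>0: "\<And>n. norm (\<alpha>0 n) \<le> B\<alpha>0" and B\<beta>0: "\<And>n. norm (\<beta>0 n) \<le> B\<beta>0"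
    using bounded_seqE assms(2,3) by metis
  show ?thesis
    by (rule that[of "max (max B\<alpha> B\<beta>) (max (max B\<alpha>0 B\<beta>0) 0)"])
       (use B\<alpha> B\<beta> B\<alpha>0 B\<beta>0 in \<open>meson max.coboundedI1 max.coboundedI2 max.cobounded2\<close>)+
qed

lemma deviation_preserved:
  fixes \<alpha>0 \<beta>0 :: "int \<Rightarrow> complex" and Fin :: "(int \<Rightarrow> real) \<Rightarrow> bool"
  assumes "bounded_seq \<alpha>0" "bounded_seq \<beta>0"
    and Fin_mono: "\<And>f g. Fin g \<Longrightarrow> (\<And>n. 0 \<le> f n) \<Longrightarrow> (\<And>n. f n \<le> g n) \<Longrightarrow> Fin f"
    and Fin_step: "\<And>F K a G \<tau> C. Fin F \<Longrightarrow> (\<And>n. 0 \<le> F n) \<Longrightarrow> 0 \<le> K \<Longrightarrow> 0 \<le> \<tau> \<Longrightarrow> \<tau> * K \<le> \<delta> \<Longrightarrow>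
        Fin a \<Longrightarrow> (\<And>n. 0 \<le> a n) \<Longrightarrow> (\<And>n. 0 \<le> G n) \<Longrightarrow> (\<And>n. G n \<le> C) \<Longrightarrow>
        (\<And>n. G n \<le> a n + \<tau> * (F n + K * (G (n - 1) + G n + G (n + 1)))) \<Longrightarrow> Fin G"
    and \<delta>: "0 < \<delta>"
    and Fin_forcing: "\<And>B. 0 \<le> B \<Longrightarrow> Fin (AL_forcing B \<alpha>0 \<beta>0)"
    and Fin_init: "Fin (deviation (\<alpha> 0) (\<beta> 0) \<alpha>0 \<beta>0)"
    and t: "t \<in> {-T<..<T}"
  shows "Fin (deviation (\<alpha> t) (\<beta> t) \<alpha>0 \<beta>0)"
proof -
  define b where "b = \<bar>t\<bar>"
  have b: "{-b..b} \<subseteq> {-T<..<T}" "t \<in> {-b..b}" using t by (auto simp: b_def)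
  obtain B where B: "0 \<le> B" "\<And>n. norm (\<alpha>0 n) \<le> B" "\<And>n. norm (\<beta>0 n) \<le> B"
    "\<And>s n. s \<in> {-b..b} \<Longrightarrow> norm (\<alpha> s n) \<le> B" "\<And>s n. s \<in> {-b..b} \<Longrightarrow> norm (\<beta> s n) \<le> B"
    using uniform_bound_on_Icc[OF b(1) assms(1,2)] by blast
  interpret deviation_dynamics "\<lambda>s n. \<alpha> s n" "\<lambda>s n. \<beta> s n" "\<lambda>s n. \<alpha>' s n" "\<lambda>s n. \<beta>' s n" \<alpha>0 \<beta>0
    b "4 + 4 * B\<^sup>2" "4 * B" "AL_forcing B \<alpha>0 \<beta>0"
  proof
    fix s n assume s: "s \<in> {-b..b}"
    then show "((\<lambda>r. \<alpha> r n) has_vector_derivative \<alpha>' s n) (at s)"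
      "((\<lambda>r. \<beta> r n) has_vector_derivative \<beta>' s n) (at s)"
      using deriv subsetD[OF b(1) s] by (auto intro: has_vector_derivative_apply_bcontfun)
    show "norm (\<alpha>' s n) + norm (\<beta>' s n) \<le> AL_forcing B \<alpha>0 \<beta>0 n + (4 + 4 * B\<^sup>2) *
        (deviation (\<alpha> s) (\<beta> s) \<alpha>0 \<beta>0 (n - 1) + deviation (\<alpha> s) (\<beta> s) \<alpha>0 \<beta>0 n
         + deviation (\<alpha> s) (\<beta> s) \<alpha>0 \<beta>0 (n + 1))"
      using subsetD[OF b(1) s] by (intro AL_speed_bound eq_\<alpha> eq_\<beta> B(4,5)[OF s] B(2,3))
    show "deviation (\<alpha> s) (\<beta> s) \<alpha>0 \<beta>0 n \<le> 4 * B"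
      using B(4,5)[OF s, of n] B(2,3)[of n] norm_triangle_ineq4[of "\<alpha> s n" "\<alpha>0 n"] norm_triangle_ineq4[of "\<beta> s n" "\<beta>0 n"]
      unfolding deviation_def by linarith
  qed (use B in \<open>simp_all add: AL_forcing_nonneg\<close>)
  show ?thesis
  proof (rule deviation_propagates[where Fin = Fin and \<delta> = \<delta> and t = t])
    show "Fin G"
      if "0 \<le> \<tau>" "\<tau> * (4 + 4 * B\<^sup>2) \<le> \<delta>" "Fin a" "\<And>n. 0 \<le> a n" "\<And>n. 0 \<le> G n" "\<And>n. G n \<le> C"
        "\<And>n. G n \<le> a n + \<tau> * (AL_forcing B \<alpha>0 \<beta>0 n + (4 + 4 * B\<^sup>2) * (G (n - 1) + G n + G (n + 1)))"
      for a G \<tau> C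
      using Fin_step[OF Fin_forcing[OF B(1)] AL_forcing_nonneg[OF B(1)] _ that] by simp
  qed (use Fin_mono \<delta> Fin_init b(2) in auto)
qed

lemma deviation_wnorm_p_finite:
  assumes w: "\<And>n. 0 \<le> w n" and R: "1 \<le> R" "\<And>n. w (n + 1) \<le> R * w n" "\<And>n. w n \<le> R * w (n + 1)"
    and q: "1 \<le> q" and bdd: "bounded_seq \<alpha>0" "bounded_seq \<beta>0"
    and data: "wnorm_p_finite w (2 * q) \<alpha>0 \<beta>0"
      "wnorm_p_finite w q (\<lambda>n. \<alpha>0 n - \<alpha>0 (n + 1)) (\<lambda>n. \<beta>0 n - \<beta>0 (n + 1))"
    and init: "wnorm_p_finite w q (\<lambda>n. \<alpha> 0 n - \<alpha>0 n) (\<lambda>n. \<beta> 0 n - \<beta>0 n)"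
    and t: "t \<in> {-T<..<T}"
  shows "wnorm_p_finite w q (\<lambda>n. \<alpha> t n - \<alpha>0 n) (\<lambda>n. \<beta> t n - \<beta>0 n)"
proof -
  have R_down: "w n \<le> R * w (n - 1)" for n using R(2)[of "n - 1"] by simp
  have "weighted_summable w q (deviation (\<alpha> t) (\<beta> t) \<alpha>0 \<beta>0)"
  proof (rule deviation_preserved[OF bdd, where Fin = "weighted_summable w q"])
    show "weighted_summable w q f" if "weighted_summable w q g" "\<And>n. 0 \<le> f n" "\<And>n. f n \<le> g n" for f g
      using q by (intro weighted_summable_mono[OF that w]) auto
    show "weighted_summable w q G"
      if "weighted_summable w q F" "\<And>n. 0 \<le> F n" "0 \<le> K" "0 \<le> \<tau>" "\<tau> * K \<le> 1 / (10 * (2 * R + 1) * (3 * R + 1))"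
        "weighted_summable w q a" "\<And>n. 0 \<le> a n" "\<And>n. 0 \<le> G n" "\<And>n. G n \<le> C"
        "\<And>n. G n \<le> a n + \<tau> * (F n + K * (G (n - 1) + G n + G (n + 1)))" for F K a G \<tau> C
      using weighted_summable_of_recurrence[OF q w R that] .
    show "weighted_summable w q (AL_forcing B \<alpha>0 \<beta>0)" if "0 \<le> B" for B
      using R(1) that by (intro weighted_summable_AL_forcing[where w = w and R = R, OF q w R_down _ _ data]) auto
  qed (use w q R(1) init t in \<open>simp_all add: wnorm_p_finite_iff_weighted_summable deviation_def[abs_def]\<close>)
  then show ?thesis using w q by (simp add: wnorm_p_finite_iff_weighted_summable deviation_def[abs_def])
qed

lemma deviation_wnorm_inf_finite:
  assumes w: "\<And>n. 0 \<le> w n" and R: "1 \<le> R" "\<And>n. w (n + 1) \<le> R * w n" "\<And>n. w n \<le> R * w (n + 1)"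
    and bdd: "bounded_seq \<alpha>0" "bounded_seq \<beta>0"
    and data: "wnorm_inf_finite w \<alpha>0 \<beta>0"
      "wnorm_inf_finite (\<lambda>n. (w n)\<^sup>2) (\<lambda>n. \<alpha>0 n - \<alpha>0 (n + 1)) (\<lambda>n. \<beta>0 n - \<beta>0 (n + 1))"
    and init: "wnorm_inf_finite (\<lambda>n. (w n)\<^sup>2) (\<lambda>n. \<alpha> 0 n - \<alpha>0 n) (\<lambda>n. \<beta> 0 n - \<beta>0 n)"
    and t: "t \<in> {-T<..<T}"
  shows "wnorm_inf_finite (\<lambda>n. (w n)\<^sup>2) (\<lambda>n. \<alpha> t n - \<alpha>0 n) (\<lambda>n. \<beta> t n - \<beta>0 n)"
proof -
  have R_down: "w n \<le> R * w (n - 1)" for n using R(2)[of "n - 1"] by simp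
  have w2: "\<And>n. 0 \<le> (w n)\<^sup>2" "\<And>n. (w (n + 1))\<^sup>2 \<le> R\<^sup>2 * (w n)\<^sup>2" "\<And>n. (w n)\<^sup>2 \<le> R\<^sup>2 * (w (n + 1))\<^sup>2"
    using w R by (simp_all add: power2_le_of_le_mult)
  have "1 \<le> R\<^sup>2" using R(1) by (simp add: one_le_power)
  have "weighted_bounded (\<lambda>n. (w n)\<^sup>2) (deviation (\<alpha> t) (\<beta> t) \<alpha>0 \<beta>0)"
  proof (rule deviation_preserved[OF bdd, where Fin = "weighted_bounded (\<lambda>n. (w n)\<^sup>2)"])
    show "weighted_bounded (\<lambda>n. (w n)\<^sup>2) f"
      if "weighted_bounded (\<lambda>n. (w n)\<^sup>2) g" "\<And>n. 0 \<le> f n" "\<And>n. f n \<le> g n" for f g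
      using weighted_bounded_mono[OF that(1,3) w2(1)] .
    show "weighted_bounded (\<lambda>n. (w n)\<^sup>2) G"
      if "weighted_bounded (\<lambda>n. (w n)\<^sup>2) F" "\<And>n. 0 \<le> F n" "0 \<le> K" "0 \<le> \<tau>"
        "\<tau> * K \<le> 1 / (2 * (2 * R\<^sup>2 + 1) * (R\<^sup>2 + 1))"
        "weighted_bounded (\<lambda>n. (w n)\<^sup>2) a" "\<And>n. 0 \<le> a n" "\<And>n. 0 \<le> G n" "\<And>n. G n \<le> C"
        "\<And>n. G n \<le> a n + \<tau> * (F n + K * (G (n - 1) + G n + G (n + 1)))" for F K a G \<tau> C
      using weighted_bounded_of_recurrence[OF w2(1) \<open>1 \<le> R\<^sup>2\<close> w2(2,3) that] .
    show "weighted_bounded (\<lambda>n. (w n)\<^sup>2) (AL_forcing B \<alpha>0 \<beta>0)" if "0 \<le> B" for B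
      using R(1) that by (intro weighted_bounded_AL_forcing[where w = w and R = R, OF w R_down _ data]) auto
    show "0 < 1 / (2 * (2 * R\<^sup>2 + 1) * (R\<^sup>2 + 1))" using \<open>1 \<le> R\<^sup>2\<close> by simp
  qed (use init t in \<open>simp_all add: wnorm_inf_finite_def weighted_bounded_def deviation_def[abs_def]\<close>)
  then show ?thesis by (simp add: wnorm_inf_finite_def weighted_bounded_def deviation_def)
qed

end

lemma weight_ratio_bounds:
  fixes w :: "int \<Rightarrow> real"
  assumes pos: "\<And>n. 0 < w n"
    and ratio: "bdd_above (range (\<lambda>n. \<bar>w (n + 1) / w n\<bar> + \<bar>w n / w (n + 1)\<bar>))"
  obtains R where "1 \<le> R" "\<And>n. w (n + 1) \<le> R * w n" "\<And>n. w n \<le> R * w (n + 1)"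
proof -
  obtain R0 where R0: "\<And>n. \<bar>w (n + 1) / w n\<bar> + \<bar>w n / w (n + 1)\<bar> \<le> R0"
    using ratio unfolding bdd_above_def by auto
  have "w (n + 1) / w n \<le> max R0 1" "w n / w (n + 1) \<le> max R0 1" for n
    using R0[of n] by (smt (verit) abs_ge_self abs_ge_zero max.cobounded1)+
  then have "w (n + 1) \<le> max R0 1 * w n" "w n \<le> max R0 1 * w (n + 1)" for n
    using pos by (simp_all add: pos_divide_le_eq)
  then show ?thesis by (intro that[of "max R0 1"]) auto
qed

theorem theorem2p4:
  fixes w :: "int \<Rightarrow> real" and p :: ennreal and T :: real
    and \<alpha>0 \<beta>0 \<alpha>t0 \<beta>t0 :: "int \<Rightarrow> complex"
    and \<alpha> \<beta> \<alpha>' \<beta>' :: "real \<Rightarrow> (int \<Rightarrow>\<^sub>C complex)"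
  assumes w_ge1: "\<And>n. w n \<ge> 1"
    and w_ratio: "bdd_above (range (\<lambda>n. \<bar>w (n + 1) / w n\<bar> + \<bar>w n / w (n + 1)\<bar>))"
    and p_ge1: "1 \<le> p"
    and bdd: "bounded_seq \<alpha>0" "bounded_seq \<beta>0" "bounded_seq \<alpha>t0" "bounded_seq \<beta>t0"
    and data_fin: "p \<noteq> \<infinity> \<Longrightarrow>
        wnorm_p_finite w (2 * enn2real p) \<alpha>0 \<beta>0 \<and>
        wnorm_p_finite w (enn2real p) (\<lambda>n. \<alpha>0 n - \<alpha>0 (n + 1)) (\<lambda>n. \<beta>0 n - \<beta>0 (n + 1)) \<and>
        wnorm_p_finite w (enn2real p) \<alpha>t0 \<beta>t0"
    and data_inf: "p = \<infinity> \<Longrightarrow>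
        wnorm_inf_finite w \<alpha>0 \<beta>0 \<and>
        wnorm_inf_finite (\<lambda>n. (w n)\<^sup>2) (\<lambda>n. \<alpha>0 n - \<alpha>0 (n + 1)) (\<lambda>n. \<beta>0 n - \<beta>0 (n + 1)) \<and>
        wnorm_inf_finite (\<lambda>n. (w n)\<^sup>2) \<alpha>t0 \<beta>t0"
    and T_pos: "T > 0"
    and deriv: "\<And>t. t \<in> {-T<..<T} \<Longrightarrow>
        (\<alpha> has_vector_derivative \<alpha>' t) (at t) \<and> (\<beta> has_vector_derivative \<beta>' t) (at t)"
    and C1: "continuous_on {-T<..<T} \<alpha>'" "continuous_on {-T<..<T} \<beta>'"
    and eq_\<alpha>: "\<And>t n. t \<in> {-T<..<T} \<Longrightarrow>
        - \<i> * \<alpha>' t n - (1 - \<alpha> t n * \<beta> t n) * (\<alpha> t (n - 1) + \<alpha> t (n + 1)) + 2 * \<alpha> t n = 0"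
    and eq_\<beta>: "\<And>t n. t \<in> {-T<..<T} \<Longrightarrow>
        - \<i> * \<beta>' t n + (1 - \<alpha> t n * \<beta> t n) * (\<beta> t (n - 1) + \<beta> t (n + 1)) - 2 * \<beta> t n = 0"
    and init: "\<And>n. \<alpha> 0 n = \<alpha>0 n + \<alpha>t0 n" "\<And>n. \<beta> 0 n = \<beta>0 n + \<beta>t0 n"
  shows "\<forall>t \<in> {-T<..<T}.
     (p \<noteq> \<infinity> \<longrightarrow> wnorm_p_finite w (enn2real p) (\<lambda>n. \<alpha> t n - \<alpha>0 n) (\<lambda>n. \<beta> t n - \<beta>0 n)) \<and>
     (p = \<infinity> \<longrightarrow> wnorm_inf_finite (\<lambda>n. (w n)\<^sup>2) (\<lambda>n. \<alpha> t n - \<alpha>0 n) (\<lambda>n. \<beta> t n - \<beta>0 n))"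
proof (intro ballI conjI impI)
  interpret ablowitz_ladik_solution \<alpha> \<beta> \<alpha>' \<beta>' T
    using deriv eq_\<alpha> eq_\<beta> by unfold_locales
  have w: "\<And>n. 0 \<le> w n" and w_pos: "\<And>n. 0 < w n" using w_ge1 by (smt (verit))+
  obtain R where R: "1 \<le> R" "\<And>n. w (n + 1) \<le> R * w n" "\<And>n. w n \<le> R * w (n + 1)"
    using weight_ratio_bounds[OF w_pos w_ratio] by blast
  have init_deviation: "(\<lambda>n. \<alpha> 0 n - \<alpha>0 n) = \<alpha>t0" "(\<lambda>n. \<beta> 0 n - \<beta>0 n) = \<beta>t0"
    by (simp_all add: fun_eq_iff init)
  fix t assume t: "t \<in> {-T<..<T}"
  {
    assume "p \<noteq> \<infinity>"
    then have "enn2real 1 \<le> enn2real p" using p_ge1 by (intro enn2real_mono) (auto simp: less_top)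
    then show "wnorm_p_finite w (enn2real p) (\<lambda>n. \<alpha> t n - \<alpha>0 n) (\<lambda>n. \<beta> t n - \<beta>0 n)"
      using data_fin[OF \<open>p \<noteq> \<infinity>\<close>] unfolding init_deviation[symmetric]
      by (intro deviation_wnorm_p_finite[where w = w and R = R, OF w R _ bdd(1,2) _ _ _ t]) auto
  }
  {
    assume "p = \<infinity>"
    then show "wnorm_inf_finite (\<lambda>n. (w n)\<^sup>2) (\<lambda>n. \<alpha> t n - \<alpha>0 n) (\<lambda>n. \<beta> t n - \<beta>0 n)"
      using data_inf unfolding init_deviation[symmetric]
      by (intro deviation_wnorm_inf_finite[where w = w and R = R, OF w R bdd(1,2) _ _ _ t]) auto
  }
qed

end
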